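(* Let $\mathcal{M}$ be a finite structure with unary predicates $A_u, A_v, A_w, \mathrm{FHalf}, \mathrm{SHalf}$ and a binary predicate $\mathrm{Mult}$ such that: the sets $A_u^{\mathcal{M}}, A_v^{\mathcal{M}}, A_w^{\mathcal{M}}$ are pairwise disjoint; $\mathrm{FHalf}^{\mathcal{M}}$ and $\mathrm{SHalf}^{\mathcal{M}}$ partition $M$ and $|\mathrm{FHalf}^{\mathcal{M}}|=\frac12|M|$; $A_u^{\mathcal{M}}\cup A_v^{\mathcal{M}}\subseteq\mathrm{FHalf}^{\mathcal{M}}$; $A_w^{\mathcal{M}}\subseteq\mathrm{SHalf}^{\mathcal{M}}$. Suppose $\mathcal{M}$ satisfies the conjunction of $$\forall y\,\big(A_w(y)\to\exists x\,\mathrm{Mult}(x,y)\big)\wedge\forall x\forall y\,\big(\mathrm{Mult}(x,y)\to(A_u(x)\wedge A_w(y))\big),$$ $$\forall x\,\big(A_u(x)\to\exists^{=50\%}y\,([\mathrm{SHalf}(y)\wedge\neg\mathrm{Mult}(x,y)]\vee A_v(y))\big),$$ $$\forall x\,\big(A_w(x)\to\exists^{=50\%}y\,([\mathrm{SHalf}(y)\wedge x\neq y]\vee\mathrm{Mult}(y,x))\big).$$ Then $|A_u^{\mathcal{M}}|\cdot|A_v^{\mathcal{M}}| = |A_w^{\mathcal{M}}|$.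
   Context: Structures are finite, over relational signatures with unary and binary relation symbols and equality. Global percentage quantifier: for a rational $0\le q\le 100$, $\mathcal{M}\models \exists^{=q\%}y\,\varphi(y)$ (possibly with other free variables fixed) iff the number of elements $b\in M$ with $\mathcal{M}\models\varphi(b)$ equals $\frac{q}{100}\cdot|M|$. *)

theory Defs
  imports Complex_Main
begin

definition pct_exists :: "'a set \<Rightarrow> rat \<Rightarrow> ('a \<Rightarrow> bool) \<Rightarrow> bool" where
  "pct_exists M q \<phi> \<longleftrightarrow> of_nat (card {b \<in> M. \<phi> b}) = (q / 100) * of_nat (card M)"

end

theory Submission
  imports Defs
begin

text \<open>Double counting of the Mult-edges. The 50\<percent> constraint for x \<in> Au says that
  removing the Mult-successors of x from SHalf and adding Av leaves |SHalf| = |M|/2 elements,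
  so every x \<in> Au has exactly |Av| successors; the one for y \<in> Aw says that removing y from
  SHalf and adding its Mult-predecessors does the same, so y has exactly one predecessor.
  Hence |Au| \<cdot> |Av| edges equal |Aw| edges.\<close>

lemma pct_exists_50_iff_card_eq:
  assumes "finite M" "F \<union> S = M" "F \<inter> S = {}"
    and "of_nat (card F) = (1/2 :: rat) * of_nat (card M)"
  shows "pct_exists M 50 \<phi> \<longleftrightarrow> card {b \<in> M. \<phi> b} = card S"
proof -
  have "card M = card F + card S"
    using assms(1-3) by (metis card_Un_disjoint finite_Un)
  then have "(of_nat (card S) :: rat) = 50 / 100 * of_nat (card M)"
    using assms(4) by simp
  then show ?thesis
    unfolding pct_exists_def by (metis of_nat_eq_iff)
qed

lemma card_Diff_Un_eq_iff:
  assumes "finite S" "finite B" "A \<subseteq> S" "S \<inter> B = {}"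
  shows "card ((S - A) \<union> B) = card S \<longleftrightarrow> card A = card B"
proof -
  have "finite A"
    using assms(1,3) by (rule rev_finite_subset)
  have "card ((S - A) \<union> B) = card (S - A) + card B"
    using assms by (intro card_Un_disjoint) auto
  also have "\<dots> = card S - card A + card B"
    using assms(3) \<open>finite A\<close> by (simp add: card_Diff_subset)
  finally have "card ((S - A) \<union> B) = card S - card A + card B" .
  moreover have "card A \<le> card S"
    using assms(1,3) by (rule card_mono)
  ultimately show ?thesis by linarith
qed

lemma card_eq_if_pct_exists_50_Diff_Un:
  assumes "finite M" "F \<union> S = M" "F \<inter> S = {}"
    and "of_nat (card F) = (1/2 :: rat) * of_nat (card M)"
    and "A \<subseteq> S" "B \<subseteq> M" "S \<inter> B = {}"
    and "pct_exists M 50 (\<lambda>b. b \<in> (S - A) \<union> B)"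
  shows "card A = card B"
proof -
  have "{b \<in> M. b \<in> (S - A) \<union> B} = (S - A) \<union> B"
    using assms(2,6) by blast
  then have "card ((S - A) \<union> B) = card S"
    using pct_exists_50_iff_card_eq[OF assms(1-4)] assms(8) by simp
  moreover have "finite S" "finite B"
    using assms(1,2,6) finite_subset by blast+
  ultimately show ?thesis
    using card_Diff_Un_eq_iff assms(5,7) by blast
qed

lemma card_pairs_left_regular:
  assumes "finite A" "finite B" "\<And>x y. r x y \<Longrightarrow> x \<in> A \<and> y \<in> B"
    and "\<And>x. x \<in> A \<Longrightarrow> card {y. r x y} = k"
  shows "card {(x, y). r x y} = card A * k"
proof -
  have "{(x, y). r x y} = Sigma A (\<lambda>x. {y. r x y})"
    using assms(3) by auto
  moreover have "finite {y. r x y}" for x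
    using assms(2,3) by (auto intro: rev_finite_subset)
  ultimately show ?thesis
    using assms(1,4) by simp
qed

lemma card_pairs_right_regular:
  assumes "finite A" "finite B" "\<And>x y. r x y \<Longrightarrow> x \<in> A \<and> y \<in> B"
    and "\<And>y. y \<in> B \<Longrightarrow> card {x. r x y} = k"
  shows "card {(x, y). r x y} = card B * k"
proof -
  have "{(x, y). r x y} = prod.swap ` {(y, x). r x y}"
    by auto
  then have "card {(x, y). r x y} = card {(y, x). r x y}"
    by (simp add: card_image)
  also have "\<dots> = card B * k"
    using card_pairs_left_regular[of B A "\<lambda>y x. r x y"] assms by blast
  finally show ?thesis .
qed

theorem mainTheorem4:
  fixes M :: "'a set"
    and Au Av Aw FHalf SHalf :: "'a set"
    and Mult :: "'a \<Rightarrow> 'a \<Rightarrow> bool"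
  assumes fin: "finite M"
    and sub: "Au \<subseteq> M" "Av \<subseteq> M" "Aw \<subseteq> M" "FHalf \<subseteq> M" "SHalf \<subseteq> M"
    and rel: "\<forall>x y. Mult x y \<longrightarrow> x \<in> M \<and> y \<in> M"
    and disj: "Au \<inter> Av = {}" "Au \<inter> Aw = {}" "Av \<inter> Aw = {}"
    and part: "FHalf \<union> SHalf = M" "FHalf \<inter> SHalf = {}"
    and half: "of_nat (card FHalf) = (1/2 :: rat) * of_nat (card M)"
    and uv: "Au \<union> Av \<subseteq> FHalf" and w: "Aw \<subseteq> SHalf"
    and ax1: "\<forall>y\<in>M. y \<in> Aw \<longrightarrow> (\<exists>x\<in>M. Mult x y)"
    and ax2: "\<forall>x\<in>M. \<forall>y\<in>M. Mult x y \<longrightarrow> (x \<in> Au \<and> y \<in> Aw)"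
    and ax3: "\<forall>x\<in>M. x \<in> Au \<longrightarrow>
               pct_exists M 50 (\<lambda>y. (y \<in> SHalf \<and> \<not> Mult x y) \<or> y \<in> Av)"
    and ax4: "\<forall>x\<in>M. x \<in> Aw \<longrightarrow>
               pct_exists M 50 (\<lambda>y. (y \<in> SHalf \<and> x \<noteq> y) \<or> Mult y x)"
  shows "card Au * card Av = card Aw"
proof -
  have fin_sets: "finite Au" "finite Av" "finite Aw"
    using fin sub finite_subset by blast+
  have edges: "Mult x y \<Longrightarrow> x \<in> Au \<and> y \<in> Aw" for x y
    using ax2 rel by blast
  note card_eq = card_eq_if_pct_exists_50_Diff_Un[OF fin part half]
  have out_degree: "card {y. Mult x y} = card Av" if "x \<in> Au" for x
  proof -
    have "(\<lambda>b. b \<in> (SHalf - {y. Mult x y}) \<union> Av) = (\<lambda>y. (y \<in> SHalf \<and> \<not> Mult x y) \<or> y \<in> Av)"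
      by auto
    then have "pct_exists M 50 (\<lambda>b. b \<in> (SHalf - {y. Mult x y}) \<union> Av)"
      using ax3 that sub by auto
    then show ?thesis
      by (rule card_eq[rotated 3]) (use edges w uv part sub in blast)+
  qed
  have in_degree: "card {x. Mult x y} = 1" if "y \<in> Aw" for y
  proof -
    have "(\<lambda>b. b \<in> (SHalf - {y}) \<union> {x. Mult x y}) = (\<lambda>x. (x \<in> SHalf \<and> y \<noteq> x) \<or> Mult x y)"
      by auto
    then have "pct_exists M 50 (\<lambda>b. b \<in> (SHalf - {y}) \<union> {x. Mult x y})"
      using ax4 that sub by auto
    then have "card {y} = card {x. Mult x y}"
      by (rule card_eq[rotated 3]) (use that edges w uv part rel in blast)+
    then show ?thesis by simp
  qed
  have "card Au * card Av = card {(x, y). Mult x y}"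
    using card_pairs_left_regular[of Au Aw Mult] fin_sets edges out_degree by metis
  also have "\<dots> = card Aw"
    using card_pairs_right_regular[of Au Aw Mult 1] fin_sets edges in_degree by simp
  finally show ?thesis .
qed

end
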